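(* Let $\gamma>0$, let $\Lambda(\boldsymbol Z,\boldsymbol n)$ be a rank-$r$ lattice in canonical form with $n=\prod_{i=1}^rn_i$ points, and let $\mathcal A(\boldsymbol Z,\boldsymbol n)=\{\boldsymbol h_{\boldsymbol\xi}:\boldsymbol\xi\in\mathbb Z_{n_1}\oplus\cdots\oplus\mathbb Z_{n_r}\}$ with $\boldsymbol Z^\top\boldsymbol h_{\boldsymbol\xi}\equiv\boldsymbol\xi\pmod{\boldsymbol n}$ be a full-cardinality anti-aliasing set chosen with minimal $\ell_2$ norm: $\|\boldsymbol h_{\boldsymbol\xi}\|_2=\min\{\|\boldsymbol h'\|_2:\boldsymbol h'\in\mathbb Z^d,\ \boldsymbol Z^\top\boldsymbol h'\equiv\boldsymbol\xi\pmod{\boldsymbol n}\}$. Let $v\in E_\alpha(\mathbb T^d)$ and $g\in E_\beta(\mathbb T^d)$, $\beta\ge2$. Let $D=\frac\gamma2D_{\boldsymbol n}$, $W=\frac1\gamma W_{\boldsymbol n}$. Then: (i) If $\alpha>5/2$, there is a constant $c_1$ independent of $\boldsymbol n$ and $\boldsymbol y$ (depending only on $d,\alpha,\gamma,v$) with $\|[D,W]\boldsymbol y\|_2\le c_1\|(D+I)\boldsymbol y\|_2$ for all $\boldsymbol y\in\mathbb R^n$. (ii) If $\alpha>9/2$, there is a constant $c_2$ independent of $\boldsymbol n$ and $\boldsymbol y$ (depending only on $d,\alpha,\gamma,v$) with $\|[D,[D,W]]\boldsymbol y\|_2\le c_2\|(D+I)^2\boldsymbol y\|_2$ for all $\boldsymbol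 y\in\mathbb R^n$.
   Context: Rank-$r$ lattice in canonical form: $\boldsymbol Z=(\boldsymbol z_1,\dots,\boldsymbol z_r)\in\mathbb Z^{d\times r}$, $\boldsymbol n=(n_1,\dots,n_r)\in\mathbb N^r$, $n_{i+1}\mid n_i$, the $\boldsymbol z_i$ linearly independent over $\mathbb Q$, components of $\boldsymbol z_i$ coprime to $n_i$; points $\boldsymbol p_{\boldsymbol k}=(\sum_i\boldsymbol z_ik_i/n_i)\bmod1$, $\boldsymbol k\in\mathbb Z_{n_1}\oplus\cdots\oplus\mathbb Z_{n_r}$, all distinct. Dual lattice $\Lambda^\perp=\{\boldsymbol h:\boldsymbol Z^\top\boldsymbol h\equiv\boldsymbol0\pmod{\boldsymbol n}\}$ (componentwise); an anti-aliasing set has no two distinct elements differing by an element of $\Lambda^\perp$; full cardinality means size $n$. Lexicographic enumeration: $\boldsymbol h^{(\chi)}=\boldsymbol h_{\boldsymbol\xi}$ with $\chi=\sum_{i=1}^r\xi_i\prod_{j>i}n_j$, and $\boldsymbol p^{(\kappa)}=\boldsymbol p_{\boldsymbol k}$ with $\kappa=\sum_{i=1}^rk_i\prod_{j>i}n_j$. Then $D_{\boldsymbol n}=\mathrm{diag}((4\pi^2\|\boldsymbol h^{(\chi)}\|_2^2)_{\chi=0}^{n-1})$, $V_{\boldsymbol n}=\mathrm{diag}((v(\boldsymbol p^{(\kappa)}))_{\kappa=0}^{n-1})$, $F_{\boldsymbol n}=\bigotimes_{i=1}^rF_{n_i}$ with $F_m=\frac1{\sqrt m}(\exp(-2\pi\mathrm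 i\,k\xi/m))_{\xi,k=0}^{m-1}$ the unitary Fourier matrix, and $W_{\boldsymbol n}=F_{\boldsymbol n}V_{\boldsymbol n}F_{\boldsymbol n}^{-1}$. $[A,B]=AB-BA$. Korobov space $E_\alpha(\mathbb T^d)=\{f\in L_2:\sum_{\boldsymbol h}|\widehat f(\boldsymbol h)|^2\prod_j\max(|h_j|^{2\alpha},1)<\infty\}$. *)

theory Defs
  imports "HOL-Analysis.Analysis" "Jordan_Normal_Form.Matrix" "HOL-Number_Theory.Cong"
begin

(* Korobov space E_alpha(T^d), described through the Fourier coefficients vhat :: int^'d => complex *)
definition korobov :: "real \<Rightarrow> (int^'d \<Rightarrow> complex) \<Rightarrow> bool" where
  "korobov \<alpha> fh \<longleftrightarrow>
     (\<lambda>h. (cmod (fh h))\<^sup>2 * (\<Prod>j\<in>UNIV. max (\<bar>real_of_int (h$j)\<bar> powr (2*\<alpha>)) 1)) summable_on UNIV"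

definition fourier_fun :: "(int^'d \<Rightarrow> complex) \<Rightarrow> real^'d \<Rightarrow> complex" where
  "fourier_fun fh x = (\<Sum>\<^sub>\<infinity>h. fh h * exp (2 * pi * \<i> * of_real (\<Sum>j\<in>UNIV. real_of_int (h$j) * x$j)))"

definition npts :: "nat list \<Rightarrow> nat" where
  "npts ns = prod_list ns"

definition radix :: "nat list \<Rightarrow> nat \<Rightarrow> nat" where
  "radix ns i = (\<Prod>j\<in>{Suc i..<length ns}. ns!j)"

(* i-th mixed-radix digit of chi, chi = sum_i xi_i prod_{j>i} n_j *)
definition digit :: "nat list \<Rightarrow> nat \<Rightarrow> nat \<Rightarrow> nat" where
  "digit ns c i = (c div radix ns i) mod (ns!i)"

definition canonical_lattice :: "(int^'d) list \<Rightarrow> nat list \<Rightarrow> bool" where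
  "canonical_lattice zs ns \<longleftrightarrow>
     length zs = length ns \<and>
     (\<forall>i<length ns. ns!i > 0) \<and>
     (\<forall>i. Suc i < length ns \<longrightarrow> ns!(Suc i) dvd ns!i) \<and>
     (\<forall>c :: nat \<Rightarrow> rat. (\<forall>j. (\<Sum>i<length zs. c i * of_int ((zs!i)$j)) = 0)
          \<longrightarrow> (\<forall>i<length zs. c i = 0)) \<and>
     (\<forall>i<length ns. \<forall>j. coprime ((zs!i)$j) (int (ns!i)))"

(* lattice point p_k with k given by its lexicographic index kappa *)
definition lattice_point :: "(int^'d) list \<Rightarrow> nat list \<Rightarrow> nat \<Rightarrow> real^'d" where
  "lattice_point zs ns \<kappa> =
     (\<chi> j. frac (\<Sum>i<length ns. real_of_int ((zs!i)$j) * real (digit ns \<kappa> i) / real (ns!i)))"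

definition points_distinct :: "(int^'d) list \<Rightarrow> nat list \<Rightarrow> bool" where
  "points_distinct zs ns \<longleftrightarrow>
     (\<forall>\<kappa><npts ns. \<forall>\<kappa>'<npts ns. \<kappa> \<noteq> \<kappa>' \<longrightarrow> lattice_point zs ns \<kappa> \<noteq> lattice_point zs ns \<kappa>')"

definition idot :: "int^'d \<Rightarrow> int^'d \<Rightarrow> int" where
  "idot a b = (\<Sum>j\<in>UNIV. a$j * b$j)"

definition isqnorm :: "int^'d \<Rightarrow> int" where
  "isqnorm h = (\<Sum>j\<in>UNIV. (h$j)^2)"

definition dual_lattice :: "(int^'d) list \<Rightarrow> nat list \<Rightarrow> (int^'d) set" where
  "dual_lattice zs ns = {h. \<forall>i<length ns. [idot (zs!i) h = 0] (mod int (ns!i))}"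

definition anti_aliasing :: "(int^'d) list \<Rightarrow> nat list \<Rightarrow> (int^'d) set \<Rightarrow> bool" where
  "anti_aliasing zs ns A \<longleftrightarrow>
     (\<forall>a\<in>A. \<forall>b\<in>A. a \<noteq> b \<longrightarrow> a - b \<notin> dual_lattice zs ns)"

(* Z^T h = xi (mod n), xi given by its lexicographic index chi *)
definition represents :: "(int^'d) list \<Rightarrow> nat list \<Rightarrow> nat \<Rightarrow> int^'d \<Rightarrow> bool" where
  "represents zs ns c h \<longleftrightarrow>
     (\<forall>i<length ns. [idot (zs!i) h = int (digit ns c i)] (mod int (ns!i)))"

definition min_anti_aliasing :: "(int^'d) list \<Rightarrow> nat list \<Rightarrow> (nat \<Rightarrow> int^'d) \<Rightarrow> bool" where
  "min_anti_aliasing zs ns hs \<longleftrightarrow>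
     anti_aliasing zs ns (hs ` {..<npts ns}) \<and>
     card (hs ` {..<npts ns}) = npts ns \<and>
     (\<forall>c<npts ns. represents zs ns c (hs c) \<and>
        (\<forall>h'. represents zs ns c h' \<longrightarrow> isqnorm (hs c) \<le> isqnorm h'))"

definition fourier_mat :: "nat \<Rightarrow> complex mat" where
  "fourier_mat m = mat m m (\<lambda>(\<xi>,k).
     exp (- 2 * pi * \<i> * of_nat k * of_nat \<xi> / of_nat m) / of_real (sqrt (real m)))"

definition kron :: "complex mat \<Rightarrow> complex mat \<Rightarrow> complex mat" where
  "kron A B = mat (dim_row A * dim_row B) (dim_col A * dim_col B)
     (\<lambda>(i,j). A $$ (i div dim_row B, j div dim_col B) * B $$ (i mod dim_row B, j mod dim_col B))"

definition F_mat :: "nat list \<Rightarrow> complex mat" where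
  "F_mat ns = foldr (\<lambda>m acc. kron (fourier_mat m) acc) ns (1\<^sub>m 1)"

definition mat_inv :: "nat \<Rightarrow> complex mat \<Rightarrow> complex mat" where
  "mat_inv n A = (THE B. B \<in> carrier_mat n n \<and> A * B = 1\<^sub>m n \<and> B * A = 1\<^sub>m n)"

definition D_mat :: "nat list \<Rightarrow> (nat \<Rightarrow> int^'d) \<Rightarrow> complex mat" where
  "D_mat ns hs = mat_diag (npts ns) (\<lambda>ch. of_real (4 * pi\<^sup>2 * real_of_int (isqnorm (hs ch))))"

definition V_mat :: "(int^'d) list \<Rightarrow> nat list \<Rightarrow> (int^'d \<Rightarrow> complex) \<Rightarrow> complex mat" where
  "V_mat zs ns vh = mat_diag (npts ns) (\<lambda>\<kappa>. fourier_fun vh (lattice_point zs ns \<kappa>))"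

definition W_mat :: "(int^'d) list \<Rightarrow> nat list \<Rightarrow> (int^'d \<Rightarrow> complex) \<Rightarrow> complex mat" where
  "W_mat zs ns vh = F_mat ns * V_mat zs ns vh * mat_inv (npts ns) (F_mat ns)"

definition commut :: "complex mat \<Rightarrow> complex mat \<Rightarrow> complex mat" where
  "commut A B = A * B - B * A"

definition vnorm2 :: "complex vec \<Rightarrow> real" where
  "vnorm2 x = sqrt (\<Sum>i<dim_vec x. (cmod (x $ i))\<^sup>2)"

end

theory Submission
  imports Defs "Jordan_Normal_Form.Determinant"
begin

text \<open>Conjugating the diagonal matrix of point values by the Fourier matrix turns \<open>W\<close> into an
  aliasing matrix: its entry \<open>(\<xi>, \<xi>')\<close> is the sum of the Fourier coefficients \<open>v(h)\<close> over
  the coset \<open>{h. Z\<^sup>T h \<equiv> \<xi> - \<xi>'}\<close> of the dual lattice. Commuting \<open>p\<close> times with the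
  diagonal \<open>D\<close> multiplies that entry by \<open>(t\<^sub>\<xi> - t\<^sub>\<xi>\<^sub>')\<^sup>p\<close>, where \<open>t\<^sub>\<xi>\<close> is a multiple
  of \<open>|h\<^sub>\<xi>|\<^sup>2\<close>. Minimality of the anti-aliasing set gives
  \<open>|h\<^sub>\<xi>|\<^sup>2 \<le> 2|h\<^sub>\<xi>\<^sub>'|\<^sup>2 + 2|h|\<^sup>2\<close> for every \<open>h\<close> in that coset, so the growing factor
  splits into \<open>(1 + t\<^sub>\<xi>\<^sub>')\<^sup>p\<close>, absorbed by \<open>(D + I)\<^sup>p\<close>, and \<open>(1 + 2|h|\<^sup>2)\<^sup>p\<close>, absorbed
  by \<open>v\<close>: by Cauchy-Schwarz against the Korobov weight, \<open>\<Sum>|v(h)|(1 + 2|h|\<^sup>2)\<^sup>p < \<infinity>\<close> once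
  \<open>2\<alpha> - 4p > 1\<close>, which is \<open>\<alpha> > 5/2\<close> for \<open>p = 1\<close> and \<open>\<alpha> > 9/2\<close> for \<open>p = 2\<close>. The cosets
  met along a row or a column are pairwise disjoint, so the Schur test bounds the commutator
  by that sum, uniformly in the lattice.\<close>

section \<open>Additive characters and mixed-radix digits\<close>

definition e2pi :: "real \<Rightarrow> complex" where
  "e2pi t = exp (2 * pi * \<i> * complex_of_real t)"

lemma e2pi_add: "e2pi (x + y) = e2pi x * e2pi y"
  unfolding e2pi_def by (simp add: distrib_left exp_add)

lemma e2pi_of_int: "e2pi (real_of_int k) = 1"
  unfolding e2pi_def by (subst exp_eq_1) (simp add: mult.commute)

lemma e2pi_eq_1_imp_int:
  assumes "e2pi x = 1"
  obtains k :: int where "x = real_of_int k"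
proof -
  from assms obtain n :: int where "Im (2 * pi * \<i> * complex_of_real x) = of_int (2 * n) * pi"
    unfolding e2pi_def by (subst (asm) exp_eq_1) auto
  then have "x = real_of_int n" by simp
  then show thesis by (rule that)
qed

lemma cnj_e2pi: "cnj (e2pi x) = e2pi (-x)"
  unfolding e2pi_def by (simp add: exp_cnj)

lemma norm_e2pi [simp]: "norm (e2pi x) = 1"
  unfolding e2pi_def by (simp add: norm_exp_eq_Re)

lemma e2pi_of_nat_mult: "e2pi (real n * x) = e2pi x ^ n"
proof -
  have "exp (2 * pi * \<i> * complex_of_real (real n * x)) = exp (of_nat n * (2 * pi * \<i> * complex_of_real x))"
    by (simp add: mult_ac)
  then show ?thesis unfolding e2pi_def by (simp only: exp_of_nat_mult)
qed

lemma sum_e2pi_multiples: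
  assumes "m > 0"
  shows "(\<Sum>x<m. e2pi (real_of_int a * real x / real m)) = (if int m dvd a then of_nat m else 0)"
proof -
  define z where "z = e2pi (real_of_int a / real m)"
  have powers: "e2pi (real_of_int a * real x / real m) = z ^ x" for x
    unfolding z_def using e2pi_of_nat_mult[of x "real_of_int a / real m"] by (simp add: mult.commute)
  show ?thesis
  proof (cases "int m dvd a")
    case True
    then obtain c where "a = int m * c" by blast
    then have "z = 1" unfolding z_def using assms e2pi_of_int[of c] by simp
    then show ?thesis using True powers by simp
  next
    case False
    have "z ^ m = 1"
      unfolding z_def using e2pi_of_nat_mult[of m "real_of_int a / real m"] assms e2pi_of_int[of a] by simp
    moreover have "z \<noteq> 1"
    proof
      assume "z = 1"
      then obtain k :: int where "real_of_int a / real m = real_of_int k"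
        unfolding z_def by (rule e2pi_eq_1_imp_int)
      then have "real_of_int a = real m * real_of_int k" using assms by (simp add: field_simps)
      then have "a = int m * k" by (metis of_int_eq_iff of_int_mult of_int_of_nat_eq)
      with False show False by simp
    qed
    ultimately have "(\<Sum>x<m. z ^ x) = 0" by (simp add: sum_gp_strict)
    then show ?thesis using False powers by simp
  qed
qed

definition moduli_pos :: "nat list \<Rightarrow> bool" where
  "moduli_pos ns \<longleftrightarrow> (\<forall>i<length ns. ns!i > 0)"

lemma canonical_lattice_moduli_pos: "canonical_lattice zs ns \<Longrightarrow> moduli_pos ns"
  unfolding canonical_lattice_def moduli_pos_def by (elim conjE) assumption

lemma moduli_pos_Cons: "moduli_pos (m#ns) \<longleftrightarrow> m > 0 \<and> moduli_pos ns"
  unfolding moduli_pos_def by (auto simp: nth_Cons' less_Suc_eq_0_disj)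

lemma npts_Nil [simp]: "npts [] = 1"
  by (simp add: npts_def)

lemma npts_Cons: "npts (m#ns) = m * npts ns"
  by (simp add: npts_def)

lemma npts_pos: "moduli_pos ns \<Longrightarrow> npts ns > 0"
  by (induction ns) (auto simp: npts_Cons moduli_pos_Cons)

lemma radix_Cons_0: "radix (m#ns) 0 = npts ns"
proof -
  have "(\<Prod>j\<in>{0..<length ns}. ns!j) = prod_list ns"
    by (simp add: prod.list_conv_set_nth)
  then show ?thesis unfolding radix_def npts_def
    by (simp only: length_Cons prod.shift_bounds_Suc_ivl nth_Cons_Suc)
qed

lemma radix_Cons_Suc: "radix (m#ns) (Suc i) = radix ns i"
  unfolding radix_def by (simp only: length_Cons prod.shift_bounds_Suc_ivl nth_Cons_Suc)

lemma radix_mult_dvd_npts: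
  assumes "i < length ns"
  shows "radix ns i * ns!i dvd npts ns"
proof -
  have "radix ns i * ns!i = (\<Prod>j\<in>{i..<length ns}. ns!j)"
    unfolding radix_def using assms by (simp add: prod.atLeast_Suc_lessThan)
  moreover have "npts ns = (\<Prod>j\<in>{0..<i}. ns!j) * (\<Prod>j\<in>{i..<length ns}. ns!j)"
    unfolding npts_def using assms
    by (simp add: prod.list_conv_set_nth prod.atLeastLessThan_concat)
  ultimately show ?thesis by simp
qed

lemma mod_div_mod_cancel:
  fixes c R n M :: nat
  assumes "R * n dvd M"
  shows "(c mod M) div R mod n = c div R mod n"
proof (cases "R = 0")
  case False
  obtain Q where M: "M = R * (n * Q)" using assms by (metis dvdE mult.assoc)
  have "c mod M = R * (c div R mod (n * Q)) + c mod R"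
    unfolding M by (rule mod_mult2_eq)
  then have "(c mod M) div R = c div R mod (n * Q)"
    using False by simp
  then show ?thesis by (simp add: mod_mod_cancel)
qed simp

lemma digit_Cons_0: "c < m * npts ns \<Longrightarrow> digit (m#ns) c 0 = c div npts ns"
  unfolding digit_def radix_Cons_0 by (simp add: less_mult_imp_div_less mult.commute)

lemma digit_Cons_Suc:
  "i < length ns \<Longrightarrow> digit (m#ns) c (Suc i) = digit ns (c mod npts ns) i"
  unfolding digit_def radix_Cons_Suc nth_Cons_Suc
  using mod_div_mod_cancel[OF radix_mult_dvd_npts] by simp

lemma digit_less: "moduli_pos ns \<Longrightarrow> i < length ns \<Longrightarrow> digit ns c i < ns!i"
  unfolding digit_def moduli_pos_def by simp

lemma digits_eq_imp_eq:
  assumes "moduli_pos ns" "c < npts ns" "c' < npts ns" "\<forall>i<length ns. digit ns c i = digit ns c' i"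
  shows "c = c'"
  using assms
proof (induction ns arbitrary: c c')
  case (Cons m ns)
  have pos: "moduli_pos ns" using Cons.prems(1) moduli_pos_Cons by auto
  have "digit (m#ns) c 0 = digit (m#ns) c' 0" using Cons.prems(4) by simp
  then have "c div npts ns = c' div npts ns"
    using digit_Cons_0 Cons.prems(2,3) by (simp add: npts_Cons)
  moreover have "c mod npts ns = c' mod npts ns"
  proof (rule Cons.IH[OF pos])
    show "\<forall>i<length ns. digit ns (c mod npts ns) i = digit ns (c' mod npts ns) i"
      using Cons.prems(4) digit_Cons_Suc by (metis Suc_less_eq length_Cons)
  qed (use npts_pos[OF pos] in auto)
  ultimately show ?case by (metis div_mod_decomp)
qed simp

lemma digits_cong_imp_eq:
  assumes "moduli_pos ns" "c < npts ns" "c' < npts ns"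
    and "\<forall>i<length ns. [int (digit ns c i) = int (digit ns c' i)] (mod int (ns!i))"
  shows "c = c'"
proof (rule digits_eq_imp_eq[OF assms(1-3)], intro allI impI)
  fix i assume "i < length ns"
  with assms(4) digit_less[OF assms(1)] show "digit ns c i = digit ns c' i"
    by (metis cong_int_iff cong_less_imp_eq_nat zero_le)
qed

lemma sum_lessThan_mult:
  fixes f :: "nat \<Rightarrow> 'a::comm_monoid_add"
  shows "(\<Sum>k<m * N. f k) = (\<Sum>x<m. \<Sum>y<N. f (x * N + y))"
proof -
  have "(\<Sum>y<N. f (x * N + y)) = sum f {x * N..<x * N + N}" for x
    by (simp add: sum.shift_bounds_nat_ivl[of f 0 "x*N" N, simplified] add.commute lessThan_atLeast0)
  then show ?thesis using sum.nat_group[of f N m] by simp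
qed

lemma sum_e2pi_digits:
  assumes "moduli_pos ns"
  shows "(\<Sum>\<kappa><npts ns. e2pi (\<Sum>i<length ns. real_of_int (a i) * real (digit ns \<kappa> i) / real (ns!i)))
         = (if \<forall>i<length ns. int (ns!i) dvd a i then of_nat (npts ns) else 0)"
  using assms
proof (induction ns arbitrary: a)
  case (Cons m ns)
  have pos: "moduli_pos ns" "m > 0" using Cons.prems moduli_pos_Cons by auto
  let ?N = "npts ns"
  let ?phase = "\<lambda>ns a \<kappa>. \<Sum>i<length ns. real_of_int (a i) * real (digit ns \<kappa> i) / real (ns!i)"
  have split: "?phase (m#ns) a (x * ?N + y) = real_of_int (a 0) * real x / real m + ?phase ns (\<lambda>i. a (Suc i)) y"
    if "x < m" "y < ?N" for x y
  proof -
    have "x * ?N + y < (x + 1) * ?N" using that by simp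
    also have "\<dots> \<le> m * ?N" using that by (intro mult_le_mono1) simp
    finally have "x * ?N + y < m * ?N" .
    then have "digit (m#ns) (x * ?N + y) 0 = x"
      using digit_Cons_0 that by simp
    moreover have "digit (m#ns) (x * ?N + y) (Suc i) = digit ns y i" if "i < length ns" for i
      using digit_Cons_Suc[OF that] \<open>y < ?N\<close> by simp
    ultimately show ?thesis by (simp only: length_Cons sum.lessThan_Suc_shift) simp
  qed
  have "(\<Sum>\<kappa><npts (m#ns). e2pi (?phase (m#ns) a \<kappa>))
      = (\<Sum>x<m. \<Sum>y<?N. e2pi (real_of_int (a 0) * real x / real m) * e2pi (?phase ns (\<lambda>i. a (Suc i)) y))"
    unfolding npts_Cons sum_lessThan_mult by (intro sum.cong refl) (simp only: lessThan_iff split e2pi_add)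
  also have "\<dots> = (\<Sum>x<m. e2pi (real_of_int (a 0) * real x / real m)) * (\<Sum>y<?N. e2pi (?phase ns (\<lambda>i. a (Suc i)) y))"
    by (rule sum_product[symmetric])
  also have "\<dots> = (if int m dvd a 0 then of_nat m else 0) *
                   (if \<forall>i<length ns. int (ns!i) dvd a (Suc i) then of_nat ?N else 0)"
    using sum_e2pi_multiples[OF pos(2)] Cons.IH[OF pos(1)] by simp
  also have "\<dots> = (if \<forall>i<length (m#ns). int ((m#ns)!i) dvd a i then of_nat (npts (m#ns)) else 0)"
    by (auto simp: npts_Cons All_less_Suc2)
  finally show ?case .
qed (simp add: e2pi_def)

section \<open>The multidimensional Fourier matrix\<close>

definition digit_phase :: "nat list \<Rightarrow> nat \<Rightarrow> nat \<Rightarrow> real" where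
  "digit_phase ns c k = (\<Sum>i<length ns. real (digit ns c i) * real (digit ns k i) / real (ns!i))"

lemma digit_phase_Cons:
  assumes "c < m * npts ns" "k < m * npts ns"
  shows "digit_phase (m#ns) c k = real (c div npts ns) * real (k div npts ns) / real m
           + digit_phase ns (c mod npts ns) (k mod npts ns)"
proof -
  have "(\<Sum>i<length ns. real (digit (m#ns) c (Suc i)) * real (digit (m#ns) k (Suc i)) / real ((m#ns)!Suc i))
      = digit_phase ns (c mod npts ns) (k mod npts ns)"
    unfolding digit_phase_def by (intro sum.cong refl) (simp add: digit_Cons_Suc)
  then show ?thesis
    unfolding digit_phase_def using assms by (simp only: length_Cons sum.lessThan_Suc_shift) (simp add: digit_Cons_0)
qed

lemma sum_e2pi_digit_phase_diff:
  assumes "moduli_pos ns" "c < npts ns" "c' < npts ns"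
  shows "(\<Sum>k<npts ns. e2pi (digit_phase ns c' k - digit_phase ns c k)) = (if c = c' then of_nat (npts ns) else 0)"
proof -
  define a where "a i = int (digit ns c' i) - int (digit ns c i)" for i
  have "digit_phase ns c' k - digit_phase ns c k = (\<Sum>i<length ns. real_of_int (a i) * real (digit ns k i) / real (ns!i))" for k
    unfolding digit_phase_def a_def by (simp add: sum_subtractf[symmetric] diff_divide_distrib left_diff_distrib)
  moreover have "(\<forall>i<length ns. int (ns!i) dvd a i) \<longleftrightarrow> c = c'"
    using digits_cong_imp_eq[OF assms(1,3,2)] unfolding a_def by (auto simp: cong_iff_dvd_diff)
  ultimately show ?thesis using sum_e2pi_digits[OF assms(1), of a] by simp
qed

lemma kron_carrier_mat:
  "A \<in> carrier_mat a b \<Longrightarrow> B \<in> carrier_mat c d \<Longrightarrow> kron A B \<in> carrier_mat (a*c) (b*d)"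
  unfolding kron_def by auto

lemma F_mat_carrier: "F_mat ns \<in> carrier_mat (npts ns) (npts ns)"
proof (induction ns)
  case (Cons m ns)
  have "fourier_mat m \<in> carrier_mat m m" unfolding fourier_mat_def by simp
  then show ?case using Cons.IH by (simp add: F_mat_def npts_Cons kron_carrier_mat)
qed (simp add: F_mat_def)

lemma F_mat_entry:
  assumes "moduli_pos ns" "c < npts ns" "k < npts ns"
  shows "F_mat ns $$ (c,k) = e2pi (- digit_phase ns c k) / complex_of_real (sqrt (real (npts ns)))"
  using assms
proof (induction ns arbitrary: c k)
  case Nil
  then show ?case by (simp add: F_mat_def digit_phase_def e2pi_def)
next
  case (Cons m ns)
  let ?N = "npts ns"
  have pos: "moduli_pos ns" using Cons.prems moduli_pos_Cons by auto
  have ck: "c < m * ?N" "k < m * ?N" using Cons.prems by (simp_all add: npts_Cons)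
  have div: "c div ?N < m" "k div ?N < m" using ck by (simp_all add: less_mult_imp_div_less)
  have mod: "c mod ?N < ?N" "k mod ?N < ?N" using npts_pos[OF pos] by simp_all
  have "F_mat (m#ns) $$ (c,k) = fourier_mat m $$ (c div ?N, k div ?N) * F_mat ns $$ (c mod ?N, k mod ?N)"
    using F_mat_carrier[of ns] ck unfolding F_mat_def kron_def fourier_mat_def by simp
  also have "\<dots> = e2pi (- (real (c div ?N) * real (k div ?N) / real m)) / complex_of_real (sqrt (real m))
         * (e2pi (- digit_phase ns (c mod ?N) (k mod ?N)) / complex_of_real (sqrt (real ?N)))"
    using div Cons.IH[OF pos mod] unfolding fourier_mat_def e2pi_def by (simp add: mult_ac)
  also have "\<dots> = e2pi (- digit_phase (m#ns) c k) / complex_of_real (sqrt (real (npts (m#ns))))"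
    using digit_phase_Cons[OF ck] by (simp add: npts_Cons real_sqrt_mult e2pi_add[symmetric])
  finally show ?case .
qed

definition F_adj :: "nat list \<Rightarrow> complex mat" where
  "F_adj ns = mat (npts ns) (npts ns) (\<lambda>(i,j). cnj (F_mat ns $$ (j,i)))"

lemma F_adj_carrier: "F_adj ns \<in> carrier_mat (npts ns) (npts ns)"
  unfolding F_adj_def by simp

lemma mult_mat_entry:
  "A \<in> carrier_mat n m \<Longrightarrow> B \<in> carrier_mat m p \<Longrightarrow> i < n \<Longrightarrow> j < p \<Longrightarrow>
    (A * B) $$ (i,j) = (\<Sum>k<m. A $$ (i,k) * B $$ (k,j))"
  by (simp add: scalar_prod_def atLeast0LessThan)

lemma mult_mat_diag_mult_entry:
  assumes "A \<in> carrier_mat n n" "B \<in> carrier_mat n n" "i < n" "j < n"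
  shows "(A * mat_diag n f * B) $$ (i,j) = (\<Sum>k<n. A $$ (i,k) * f k * B $$ (k,j))"
  unfolding mat_diag_mult_right[OF assms(1)] using assms by (subst mult_mat_entry[where m = n]) auto

lemma F_mat_diag_F_adj_entry:
  assumes "moduli_pos ns" "c < npts ns" "c' < npts ns"
  shows "(F_mat ns * mat_diag (npts ns) f * F_adj ns) $$ (c,c')
           = (\<Sum>k<npts ns. f k * e2pi (digit_phase ns c' k - digit_phase ns c k)) / of_nat (npts ns)"
proof -
  let ?s = "complex_of_real (sqrt (real (npts ns)))"
  have "?s * ?s = of_nat (npts ns)" by (simp flip: of_real_mult)
  then have "F_mat ns $$ (c,k) * f k * F_adj ns $$ (k,c')
      = f k * e2pi (digit_phase ns c' k - digit_phase ns c k) / of_nat (npts ns)" if "k < npts ns" for k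
    using that assms unfolding F_adj_def
    by (simp add: F_mat_entry cnj_e2pi e2pi_add[symmetric])
  then show ?thesis
    using assms by (simp add: mult_mat_diag_mult_entry F_mat_carrier F_adj_carrier sum_divide_distrib)
qed

lemma F_mat_mult_F_adj:
  assumes "moduli_pos ns"
  shows "F_mat ns * F_adj ns = 1\<^sub>m (npts ns)"
proof (rule eq_matI)
  fix c c' assume "c < dim_row (1\<^sub>m (npts ns))" "c' < dim_col (1\<^sub>m (npts ns))"
  then have cc: "c < npts ns" "c' < npts ns" by simp_all
  have "F_mat ns * mat_diag (npts ns) (\<lambda>_. 1) = F_mat ns"
    using F_mat_carrier[of ns] by simp
  then show "(F_mat ns * F_adj ns) $$ (c,c') = 1\<^sub>m (npts ns) $$ (c,c')"
    using F_mat_diag_F_adj_entry[OF assms cc, of "\<lambda>_. 1"] cc npts_pos[OF assms]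
    by (simp add: sum_e2pi_digit_phase_diff[OF assms cc])
qed (use F_mat_carrier F_adj_carrier in auto)

lemma mat_inv_F_mat:
  assumes "moduli_pos ns"
  shows "mat_inv (npts ns) (F_mat ns) = F_adj ns"
  unfolding mat_inv_def
proof (rule the_equality)
  have "F_adj ns * F_mat ns = 1\<^sub>m (npts ns)"
    using mat_mult_left_right_inverse[OF F_mat_carrier F_adj_carrier F_mat_mult_F_adj[OF assms]] .
  then show "F_adj ns \<in> carrier_mat (npts ns) (npts ns) \<and>
      F_mat ns * F_adj ns = 1\<^sub>m (npts ns) \<and> F_adj ns * F_mat ns = 1\<^sub>m (npts ns)"
    using F_adj_carrier F_mat_mult_F_adj[OF assms] by blast
next
  fix B assume "B \<in> carrier_mat (npts ns) (npts ns) \<and> F_mat ns * B = 1\<^sub>m (npts ns) \<and> B * F_mat ns = 1\<^sub>m (npts ns)"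
  then have B: "B \<in> carrier_mat (npts ns) (npts ns)" "B * F_mat ns = 1\<^sub>m (npts ns)" by blast+
  then have "B = B * (F_mat ns * F_adj ns)" by (simp add: F_mat_mult_F_adj[OF assms])
  also have "\<dots> = F_adj ns"
    using B F_adj_carrier[of ns] by (simp add: assoc_mult_mat[OF B(1) F_mat_carrier F_adj_carrier, symmetric])
  finally show "B = F_adj ns" .
qed

section \<open>Aliasing: the entries of \<open>W\<close>\<close>

lemma fourier_fun_lattice_point:
  fixes zs :: "(int^'d) list"
  shows "fourier_fun vh (lattice_point zs ns k)
     = (\<Sum>\<^sub>\<infinity>h. vh h * e2pi (\<Sum>i<length ns. real_of_int (idot (zs!i) h) * real (digit ns k i) / real (ns!i)))"
proof -
  define X where "X j = (\<Sum>i<length ns. real_of_int ((zs!i)$j) * real (digit ns k i) / real (ns!i))" for j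
  have phase: "(\<Sum>j\<in>UNIV. real_of_int (h$j) * (lattice_point zs ns k)$j)
      = (\<Sum>i<length ns. real_of_int (idot (zs!i) h) * real (digit ns k i) / real (ns!i))
        + real_of_int (- (\<Sum>j\<in>UNIV. h$j * \<lfloor>X j\<rfloor>))" for h :: "int^'d"
  proof -
    have "(\<Sum>j\<in>UNIV. real_of_int (h$j) * X j)
        = (\<Sum>i<length ns. real_of_int (idot (zs!i) h) * real (digit ns k i) / real (ns!i))"
      unfolding X_def idot_def
      by (simp add: sum_distrib_left sum_distrib_right sum_divide_distrib mult_ac sum.swap[of _ UNIV])
    then show ?thesis
      unfolding lattice_point_def X_def[symmetric] frac_def by (simp add: right_diff_distrib sum_subtractf)
  qed
  show ?thesis
    unfolding fourier_fun_def e2pi_def[symmetric] phase e2pi_add e2pi_of_int by simp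
qed

lemma has_sum_sum:
  fixes f :: "'k \<Rightarrow> 'a \<Rightarrow> 'b::topological_comm_monoid_add"
  shows "finite K \<Longrightarrow> (\<And>k. k \<in> K \<Longrightarrow> (f k has_sum s k) A) \<Longrightarrow>
    ((\<lambda>x. \<Sum>k\<in>K. f k x) has_sum (\<Sum>k\<in>K. s k)) A"
  by (induction K rule: finite_induct) (auto intro!: has_sum_add)

lemma sum_fourier_fun_lattice_point_e2pi:
  fixes vh :: "int^'d \<Rightarrow> complex"
  assumes pos: "moduli_pos ns" and vs: "(\<lambda>h. norm (vh h)) summable_on UNIV"
  shows "(\<Sum>k<npts ns. fourier_fun vh (lattice_point zs ns k) *
            e2pi (\<Sum>i<length ns. real_of_int (b i) * real (digit ns k i) / real (ns!i)))
         = of_nat (npts ns) * infsum vh {h. \<forall>i<length ns. int (ns!i) dvd idot (zs!i) h + b i}"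
proof -
  let ?S = "{h. \<forall>i<length ns. int (ns!i) dvd idot (zs!i) h + b i}"
  define a where "a h i = idot (zs!i) h + b i" for h i
  define E where "E h k = e2pi (\<Sum>i<length ns. real_of_int (a h i) * real (digit ns k i) / real (ns!i))" for h k
  have summable: "(\<lambda>h. vh h * c h) summable_on UNIV" if "\<And>h. norm (c h) \<le> 1" for c :: "int^'d \<Rightarrow> complex"
    by (rule abs_summable_summable, rule summable_on_comparison_test[OF vs])
       (use that in \<open>auto simp: norm_mult intro: mult_left_le\<close>)
  have summand: "fourier_fun vh (lattice_point zs ns k) *
          e2pi (\<Sum>i<length ns. real_of_int (b i) * real (digit ns k i) / real (ns!i))
        = (\<Sum>\<^sub>\<infinity>h. vh h * E h k)" for k
    unfolding fourier_fun_lattice_point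
    by (subst infsum_cmult_left[symmetric], rule summable)
       (simp_all add: E_def a_def mult.assoc e2pi_add[symmetric] sum.distrib[symmetric] add_divide_distrib distrib_right)
  have "(\<Sum>k<npts ns. fourier_fun vh (lattice_point zs ns k) *
            e2pi (\<Sum>i<length ns. real_of_int (b i) * real (digit ns k i) / real (ns!i)))
      = (\<Sum>k<npts ns. \<Sum>\<^sub>\<infinity>h. vh h * E h k)"
    by (simp only: summand)
  also have "(\<Sum>k<npts ns. \<Sum>\<^sub>\<infinity>h. vh h * E h k) = (\<Sum>\<^sub>\<infinity>h. \<Sum>k<npts ns. vh h * E h k)"
    by (rule infsumI [symmetric], rule has_sum_sum) (auto intro!: has_sum_infsum summable simp: E_def)
  also have "\<dots> = (\<Sum>\<^sub>\<infinity>h. of_nat (npts ns) * (if h \<in> ?S then vh h else 0))"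
    unfolding E_def sum_distrib_left[symmetric] sum_e2pi_digits[OF pos] by (intro infsum_cong) (auto simp: a_def)
  also have "\<dots> = of_nat (npts ns) * infsum vh ?S"
  proof -
    have "(\<lambda>h. if h \<in> ?S then vh h else 0) summable_on UNIV"
      by (rule abs_summable_summable, rule summable_on_comparison_test[OF vs]) auto
    moreover have "infsum (\<lambda>h. if h \<in> ?S then vh h else 0) UNIV = infsum vh ?S"
      by (rule infsum_cong_neutral) auto
    ultimately show ?thesis by (simp add: infsum_cmult_right)
  qed
  finally show ?thesis .
qed

definition alias_class :: "(int^'d) list \<Rightarrow> nat list \<Rightarrow> nat \<Rightarrow> nat \<Rightarrow> (int^'d) set" where
  "alias_class zs ns c c' =
     {h. \<forall>i<length ns. [idot (zs!i) h = int (digit ns c i) - int (digit ns c' i)] (mod int (ns!i))}"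

lemma W_mat_entry:
  fixes vh :: "int^'d \<Rightarrow> complex"
  assumes pos: "moduli_pos ns" and cc: "c < npts ns" "c' < npts ns"
    and vs: "(\<lambda>h. norm (vh h)) summable_on UNIV"
  shows "W_mat zs ns vh $$ (c,c') = infsum vh (alias_class zs ns c c')"
proof -
  define b where "b i = int (digit ns c' i) - int (digit ns c i)" for i
  have "digit_phase ns c' k - digit_phase ns c k
      = (\<Sum>i<length ns. real_of_int (b i) * real (digit ns k i) / real (ns!i))" for k
    unfolding digit_phase_def b_def by (simp add: sum_subtractf[symmetric] diff_divide_distrib left_diff_distrib)
  moreover have "{h. \<forall>i<length ns. int (ns!i) dvd idot (zs!i) h + b i} = alias_class zs ns c c'"
    unfolding alias_class_def b_def by (simp add: cong_iff_dvd_diff algebra_simps)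
  ultimately show ?thesis
    unfolding W_mat_def V_mat_def mat_inv_F_mat[OF pos] F_mat_diag_F_adj_entry[OF pos cc]
    using sum_fourier_fun_lattice_point_e2pi[OF pos vs, of zs b] npts_pos[OF pos] by simp
qed

section \<open>Summability from the Korobov condition\<close>

lemma summable_on_one_plus_nat_powr:
  assumes "p > 1"
  shows "(\<lambda>n::nat. (1 + real n) powr (-p)) summable_on UNIV"
proof -
  have "summable (\<lambda>n. real n powr (-p))" using summable_real_powr_iff assms by simp
  then have "summable (\<lambda>n. (1 + real n) powr (-p))"
    using summable_Suc_iff[of "\<lambda>n. real n powr (-p)"] by (simp add: add.commute)
  then show ?thesis by (subst summable_on_UNIV_nonneg_real_iff) auto
qed

lemma summable_on_one_plus_abs_int_powr:
  assumes "p > 1"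
  shows "(\<lambda>t::int. (1 + real_of_int \<bar>t\<bar>) powr (-p)) summable_on UNIV"
proof -
  let ?f = "\<lambda>t::int. (1 + real_of_int \<bar>t\<bar>) powr (-p)"
  have "?f summable_on range int" "?f summable_on range (\<lambda>n. - int n)"
    by (subst summable_on_reindex; use summable_on_one_plus_nat_powr[OF assms] in \<open>simp add: inj_on_def o_def\<close>)+
  then have "?f summable_on (range int \<union> range (\<lambda>n. - int n))"
    by (rule summable_on_union)
  moreover have "t \<in> range int \<union> range (\<lambda>n. - int n)" for t :: int
    by (cases t rule: int_cases2) auto
  ultimately show ?thesis
    by (metis UNIV_eq_I)
qed

definition korobov_weight :: "real \<Rightarrow> int^'d \<Rightarrow> real" where
  "korobov_weight \<alpha> h = (\<Prod>j\<in>UNIV. max (\<bar>real_of_int (h$j)\<bar> powr (2*\<alpha>)) 1)"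

definition korobov_ratio :: "nat \<Rightarrow> real \<Rightarrow> int \<Rightarrow> real" where
  "korobov_ratio q \<alpha> t = (1 + 2 * (real_of_int t)\<^sup>2)^q / max (\<bar>real_of_int t\<bar> powr (2*\<alpha>)) 1"

lemma korobov_weight_pos: "korobov_weight \<alpha> h > 0"
  unfolding korobov_weight_def by (intro prod_pos) auto

lemma korobov_ratio_nonneg: "korobov_ratio q \<alpha> t \<ge> 0"
  unfolding korobov_ratio_def by (intro divide_nonneg_pos) auto

lemma korobov_ratio_le:
  assumes "\<alpha> > 0"
  shows "korobov_ratio q \<alpha> t \<le> 2^q * 2 powr (2*\<alpha>) * (1 + real_of_int \<bar>t\<bar>) powr (-(2*\<alpha> - 2 * real q))"
proof -
  define a where "a = 1 + \<bar>real_of_int t\<bar>"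
  have a1: "a \<ge> 1" unfolding a_def by simp
  have "1 + 2 * (real_of_int t)\<^sup>2 \<le> 2 * a\<^sup>2"
    unfolding a_def by (simp add: power2_eq_square algebra_simps)
  then have "(1 + 2 * (real_of_int t)\<^sup>2)^q \<le> (2 * a\<^sup>2)^q"
    by (intro power_mono) auto
  also have "\<dots> = 2^q * a powr (2 * real q)"
    using a1 powr_realpow[of a "2*q"] by (simp add: power_mult_distrib power_mult[symmetric])
  finally have num: "(1 + 2 * (real_of_int t)\<^sup>2)^q \<le> 2^q * a powr (2 * real q)" .
  have den: "(a/2) powr (2*\<alpha>) \<le> max (\<bar>real_of_int t\<bar> powr (2*\<alpha>)) 1"
  proof (cases "t = 0")
    case True
    then show ?thesis using assms by (simp add: a_def powr_le1)
  next
    case False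
    then have "\<bar>real_of_int t\<bar> \<ge> 1" by linarith
    then have "a/2 \<le> \<bar>real_of_int t\<bar>" unfolding a_def by simp
    then show ?thesis using a1 assms by (simp add: powr_mono2 le_max_iff_disj)
  qed
  have "korobov_ratio q \<alpha> t \<le> 2^q * a powr (2 * real q) / (a/2) powr (2*\<alpha>)"
    unfolding korobov_ratio_def by (rule frac_le) (use num den a1 in auto)
  also have "\<dots> = 2^q * 2 powr (2*\<alpha>) * a powr (-(2*\<alpha> - 2 * real q))"
    using a1 by (simp add: powr_divide powr_diff powr_minus_divide field_simps)
  finally show ?thesis unfolding a_def by simp
qed

lemma summable_on_korobov_ratio:
  assumes "2*\<alpha> - 2 * real q > 1"
  shows "korobov_ratio q \<alpha> summable_on UNIV"
proof (rule summable_on_comparison_test)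
  show "(\<lambda>t. 2^q * 2 powr (2*\<alpha>) * (1 + real_of_int \<bar>t\<bar>) powr (-(2*\<alpha> - 2 * real q))) summable_on UNIV"
    by (intro summable_on_cmult_right summable_on_one_plus_abs_int_powr assms)
  show "korobov_ratio q \<alpha> t \<le> 2^q * 2 powr (2*\<alpha>) * (1 + real_of_int \<bar>t\<bar>) powr (-(2*\<alpha> - 2 * real q))" for t
    using korobov_ratio_le[of \<alpha> q t] assms by simp
qed (rule korobov_ratio_nonneg)

lemma summable_on_prod_vec_nth:
  fixes g :: "int \<Rightarrow> real"
  assumes nonneg: "\<And>t. g t \<ge> 0" and summable: "g summable_on UNIV"
  shows "(\<lambda>h::int^'d. \<Prod>j\<in>UNIV. g (h$j)) summable_on UNIV"
proof -
  have "Infinite_Sum.abs_summable_on g UNIV"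
    using summable nonneg by simp
  then have "Infinite_Set_Sum.abs_summable_on g UNIV"
    by (rule abs_summable_equivalent[THEN iffD1])
  then have "Infinite_Set_Sum.abs_summable_on (\<lambda>f. \<Prod>j\<in>(UNIV::'d set). g (f j)) (PiE UNIV (\<lambda>_. UNIV))"
    by (intro abs_summable_on_prod_PiE) auto
  then have "Infinite_Sum.abs_summable_on (\<lambda>f. \<Prod>j\<in>(UNIV::'d set). g (f j)) UNIV"
    by (simp only: abs_summable_equivalent[symmetric] PiE_UNIV)
  then have "(\<lambda>f. \<Prod>j\<in>(UNIV::'d set). g (f j)) summable_on UNIV"
    using nonneg by (simp add: prod_nonneg)
  moreover have "inj (vec_nth :: int^'d \<Rightarrow> 'd \<Rightarrow> int)" "surj (vec_nth :: int^'d \<Rightarrow> 'd \<Rightarrow> int)"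
    by (simp add: inj_on_def vec_nth_inject) (metis surj_def vec_lambda_beta ext)
  ultimately show ?thesis
    using summable_on_reindex[of "vec_nth :: int^'d \<Rightarrow> 'd \<Rightarrow> int" UNIV "\<lambda>f. \<Prod>j\<in>UNIV. g (f j)"]
    by (simp add: o_def)
qed

lemma one_plus_sum_le_prod:
  fixes x :: "'a \<Rightarrow> real"
  assumes "finite A" "\<And>i. i \<in> A \<Longrightarrow> x i \<ge> 0"
  shows "1 + (\<Sum>i\<in>A. x i) \<le> (\<Prod>i\<in>A. 1 + x i)"
  using assms
proof (induction A rule: finite_induct)
  case (insert a A)
  then have "1 + (\<Sum>i\<in>insert a A. x i) \<le> (1 + x a) * (1 + (\<Sum>i\<in>A. x i))"
    by (simp add: algebra_simps sum_nonneg)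
  also have "\<dots> \<le> (1 + x a) * (\<Prod>i\<in>A. 1 + x i)"
    using insert by (intro mult_left_mono) auto
  finally show ?case using insert by simp
qed simp

lemma isqnorm_nonneg: "isqnorm h \<ge> 0"
  unfolding isqnorm_def by (simp add: sum_nonneg)

lemma radial_weight_le_prod_korobov_ratio:
  "(1 + 2 * real_of_int (isqnorm h))^q / korobov_weight \<alpha> h \<le> (\<Prod>j\<in>UNIV. korobov_ratio q \<alpha> (h$j))"
proof -
  have "1 + 2 * real_of_int (isqnorm h) \<le> (\<Prod>j\<in>UNIV. 1 + 2 * (real_of_int (h$j))\<^sup>2)"
    using one_plus_sum_le_prod[of UNIV "\<lambda>j. 2 * (real_of_int (h$j))\<^sup>2"]
    unfolding isqnorm_def by (simp add: sum_distrib_left)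
  then have "(1 + 2 * real_of_int (isqnorm h))^q \<le> (\<Prod>j\<in>UNIV. 1 + 2 * (real_of_int (h$j))\<^sup>2)^q"
    using isqnorm_nonneg[of h] by (intro power_mono) auto
  then show ?thesis
    using korobov_weight_pos[of \<alpha> h] unfolding korobov_weight_def korobov_ratio_def
    by (simp add: divide_right_mono prod_power_distrib[symmetric] prod_dividef)
qed

definition coeff_weight :: "(int^'d \<Rightarrow> complex) \<Rightarrow> nat \<Rightarrow> int^'d \<Rightarrow> real" where
  "coeff_weight vh p h = norm (vh h) * (1 + 2 * real_of_int (isqnorm h))^p"

lemma coeff_weight_nonneg: "coeff_weight vh p h \<ge> 0"
  unfolding coeff_weight_def using isqnorm_nonneg[of h] by simp

lemma summable_on_coeff_weight:
  fixes vh :: "int^'d \<Rightarrow> complex"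
  assumes "korobov \<alpha> vh" and "2*\<alpha> - 4 * real p > 1"
  shows "coeff_weight vh p summable_on UNIV"
proof -
  define x where "x h = norm (vh h) * sqrt (korobov_weight \<alpha> h)" for h :: "int^'d"
  define y where "y h = (1 + 2 * real_of_int (isqnorm h))^p / sqrt (korobov_weight \<alpha> h)" for h :: "int^'d"
  have "norm (x h * x h) = (norm (vh h))\<^sup>2 * korobov_weight \<alpha> h" for h
    unfolding x_def using korobov_weight_pos[of \<alpha> h] by (simp add: power2_eq_square mult_ac)
  then have "(\<lambda>h. norm (x h * x h)) summable_on UNIV"
    using assms(1) unfolding korobov_def korobov_weight_def by (simp add: abs_mult prod_nonneg)
  moreover have "(\<lambda>h. norm (y h * y h)) summable_on UNIV"
  proof (rule summable_on_comparison_test)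
    show "(\<lambda>h::int^'d. \<Prod>j\<in>UNIV. korobov_ratio (2*p) \<alpha> (h$j)) summable_on UNIV"
      using assms(2) by (intro summable_on_prod_vec_nth korobov_ratio_nonneg summable_on_korobov_ratio) simp
    show "norm (y h * y h) \<le> (\<Prod>j\<in>UNIV. korobov_ratio (2*p) \<alpha> (h$j))" for h
      using radial_weight_le_prod_korobov_ratio[of h "2*p" \<alpha>] korobov_weight_pos[of \<alpha> h] isqnorm_nonneg[of h]
      unfolding y_def by (simp add: power_mult mult.commute[of 2 p] power2_eq_square[symmetric] power_divide)
  qed auto
  ultimately have "(\<lambda>h. norm (x h * y h)) summable_on UNIV"
    by (rule abs_summable_product)
  moreover have "norm (x h * y h) = coeff_weight vh p h" for h
    unfolding x_def y_def coeff_weight_def using korobov_weight_pos[of \<alpha> h] isqnorm_nonneg[of h] by (simp add: abs_mult)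
  ultimately show ?thesis by simp
qed

section \<open>Minimal anti-aliasing sets\<close>

lemma idot_add: "idot z (a + b) = idot z a + idot z b"
  unfolding idot_def by (simp add: distrib_left sum.distrib)

lemma isqnorm_add_le: "isqnorm (u + h) \<le> 2 * isqnorm u + 2 * isqnorm h"
proof -
  have "(u$j + h$j)^2 \<le> 2 * (u$j)^2 + 2 * (h$j)^2" for j
    using zero_le_power2[of "u$j - h$j"] by (simp add: power2_eq_square algebra_simps)
  then have "(\<Sum>j\<in>UNIV. (u$j + h$j)^2) \<le> (\<Sum>j\<in>UNIV. 2 * (u$j)^2 + 2 * (h$j)^2)"
    by (intro sum_mono)
  then show ?thesis unfolding isqnorm_def by (simp add: sum.distrib sum_distrib_left)
qed

text \<open>Translating the minimal representative of \<open>\<xi>'\<close> by an alias of \<open>\<xi> - \<xi>'\<close> gives a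
  representative of \<open>\<xi>\<close>, so minimality of \<open>h\<^sub>\<xi>\<close> bounds it by that sum.\<close>
lemma min_anti_aliasing_isqnorm_le:
  assumes mh: "min_anti_aliasing zs ns hs" and cc: "c < npts ns" "c' < npts ns"
    and h: "h \<in> alias_class zs ns c c'"
  shows "isqnorm (hs c) \<le> 2 * isqnorm (hs c') + 2 * isqnorm h"
proof -
  have "represents zs ns c (hs c' + h)"
    unfolding represents_def
  proof (intro allI impI)
    fix i assume i: "i < length ns"
    have "[idot (zs!i) (hs c') = int (digit ns c' i)] (mod int (ns!i))"
      using mh cc i unfolding min_anti_aliasing_def represents_def by blast
    moreover have "[idot (zs!i) h = int (digit ns c i) - int (digit ns c' i)] (mod int (ns!i))"
      using h i unfolding alias_class_def by blast
    ultimately show "[idot (zs!i) (hs c' + h) = int (digit ns c i)] (mod int (ns!i))"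
      unfolding idot_add by (auto dest: cong_add)
  qed
  then have "isqnorm (hs c) \<le> isqnorm (hs c' + h)"
    using mh cc unfolding min_anti_aliasing_def by blast
  then show ?thesis using isqnorm_add_le[of "hs c'" h] by linarith
qed

lemma alias_class_disjoint_right:
  assumes "moduli_pos ns" "c1 < npts ns" "c2 < npts ns" "c1 \<noteq> c2"
  shows "alias_class zs ns c c1 \<inter> alias_class zs ns c c2 = {}"
proof -
  have "c2 = c1" if "h \<in> alias_class zs ns c c1" "h \<in> alias_class zs ns c c2" for h
  proof (rule digits_cong_imp_eq[OF assms(1,3,2)], intro allI impI)
    fix i assume "i < length ns"
    with that have "[idot (zs!i) h = int (digit ns c i) - int (digit ns c1 i)] (mod int (ns!i))"
      "[idot (zs!i) h = int (digit ns c i) - int (digit ns c2 i)] (mod int (ns!i))"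
      unfolding alias_class_def by blast+
    then have "[int (digit ns c i) - int (digit ns c1 i) = int (digit ns c i) - int (digit ns c2 i)] (mod int (ns!i))"
      using cong_sym cong_trans by blast
    then show "[int (digit ns c2 i) = int (digit ns c1 i)] (mod int (ns!i))"
      by (simp add: cong_iff_dvd_diff)
  qed
  with assms(4) show ?thesis by blast
qed

lemma alias_class_disjoint_left:
  assumes "moduli_pos ns" "c1 < npts ns" "c2 < npts ns" "c1 \<noteq> c2"
  shows "alias_class zs ns c1 c \<inter> alias_class zs ns c2 c = {}"
proof -
  have "c1 = c2" if "h \<in> alias_class zs ns c1 c" "h \<in> alias_class zs ns c2 c" for h
  proof (rule digits_cong_imp_eq[OF assms(1,2,3)], intro allI impI)
    fix i assume "i < length ns"
    with that have "[idot (zs!i) h = int (digit ns c1 i) - int (digit ns c i)] (mod int (ns!i))"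
      "[idot (zs!i) h = int (digit ns c2 i) - int (digit ns c i)] (mod int (ns!i))"
      unfolding alias_class_def by blast+
    then have "[int (digit ns c1 i) - int (digit ns c i) = int (digit ns c2 i) - int (digit ns c i)] (mod int (ns!i))"
      using cong_sym cong_trans by blast
    then show "[int (digit ns c1 i) = int (digit ns c2 i)] (mod int (ns!i))"
      by (simp add: cong_iff_dvd_diff)
  qed
  with assms(4) show ?thesis by blast
qed

lemma sum_infsum_disjoint_le:
  fixes w :: "'a \<Rightarrow> real" and N :: nat
  assumes "\<And>h. w h \<ge> 0" "w summable_on UNIV"
    and "\<And>a a'. a < N \<Longrightarrow> a' < N \<Longrightarrow> a \<noteq> a' \<Longrightarrow> B a \<inter> B a' = {}"
  shows "(\<Sum>a<N. infsum w (B a)) \<le> infsum w UNIV"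
proof -
  have "w summable_on A" for A
    using assms(2) by (rule summable_on_subset) simp
  then have "(\<Sum>a<N. infsum w (B a)) = infsum w (\<Union>a<N. B a)"
    using assms(3) by (intro sum_infsum) auto
  also have "\<dots> \<le> infsum w UNIV"
    using assms(1,2) \<open>\<And>A. w summable_on A\<close> by (intro infsum_mono_neutral) auto
  finally show ?thesis .
qed

section \<open>The Schur test and commutators with diagonal matrices\<close>

lemma mult_mat_vec_index:
  "A \<in> carrier_mat n m \<Longrightarrow> dim_vec x = m \<Longrightarrow> i < n \<Longrightarrow>
    (A *\<^sub>v x) $ i = (\<Sum>j<m. A $$ (i,j) * x $ j)"
  by (simp add: scalar_prod_def atLeast0LessThan)

lemma schur_test:
  fixes A :: "complex mat" and x :: "complex vec" and M :: "nat \<Rightarrow> nat \<Rightarrow> real" and u :: "nat \<Rightarrow> real"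
  assumes A: "A \<in> carrier_mat N N" and x: "dim_vec x = N"
    and M_nonneg: "\<And>i j. M i j \<ge> 0" and u_nonneg: "\<And>j. u j \<ge> 0"
    and entry: "\<And>i j. i < N \<Longrightarrow> j < N \<Longrightarrow> norm (A $$ (i,j) * x $ j) \<le> M i j * u j"
    and row: "\<And>i. i < N \<Longrightarrow> (\<Sum>j<N. M i j) \<le> S"
    and col: "\<And>j. j < N \<Longrightarrow> (\<Sum>i<N. M i j) \<le> S"
  shows "vnorm2 (A *\<^sub>v x) \<le> S * sqrt (\<Sum>j<N. (u j)\<^sup>2)"
proof -
  have S: "S \<ge> 0" if "N > 0"
    using order_trans[OF sum_nonneg row[OF that]] M_nonneg by blast
  have rows: "(norm ((A *\<^sub>v x) $ i))\<^sup>2 \<le> S * (\<Sum>j<N. M i j * (u j)\<^sup>2)" if i: "i < N" for i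
  proof -
    have "norm ((A *\<^sub>v x) $ i) \<le> (\<Sum>j<N. sqrt (M i j) * (sqrt (M i j) * u j))"
      unfolding mult_mat_vec_index[OF A x i] using entry[OF i] M_nonneg
      by (intro order_trans[OF norm_sum] sum_mono) (simp add: mult.assoc[symmetric])
    then have "(norm ((A *\<^sub>v x) $ i))\<^sup>2 \<le> (\<Sum>j<N. sqrt (M i j) * (sqrt (M i j) * u j))\<^sup>2"
      by (intro power_mono) auto
    also have "\<dots> \<le> (\<Sum>j<N. (sqrt (M i j))\<^sup>2) * (\<Sum>j<N. (sqrt (M i j) * u j)\<^sup>2)"
      by (rule Cauchy_Schwarz_ineq_sum)
    also have "\<dots> = (\<Sum>j<N. M i j) * (\<Sum>j<N. M i j * (u j)\<^sup>2)"
      using M_nonneg by (simp add: power_mult_distrib)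
    also have "\<dots> \<le> S * (\<Sum>j<N. M i j * (u j)\<^sup>2)"
      using row[OF i] M_nonneg by (intro mult_right_mono sum_nonneg) auto
    finally show ?thesis .
  qed
  have swap: "(\<Sum>i<N. \<Sum>j<N. M i j * (u j)\<^sup>2) = (\<Sum>j<N. (u j)\<^sup>2 * (\<Sum>i<N. M i j))"
    by (subst sum.swap) (simp add: sum_distrib_left mult.commute)
  from rows have "(\<Sum>i<N. (norm ((A *\<^sub>v x) $ i))\<^sup>2) \<le> (\<Sum>i<N. S * (\<Sum>j<N. M i j * (u j)\<^sup>2))"
    by (rule sum_mono) simp
  also have "\<dots> = S * (\<Sum>j<N. (u j)\<^sup>2 * (\<Sum>i<N. M i j))"
    by (simp only: sum_distrib_left[symmetric] swap)
  also have "\<dots> \<le> S * (\<Sum>j<N. (u j)\<^sup>2 * S)"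
  proof (cases "N > 0")
    case True
    then show ?thesis using col S by (intro mult_left_mono sum_mono) auto
  qed simp
  also have "\<dots> = S\<^sup>2 * (\<Sum>j<N. (u j)\<^sup>2)"
    by (simp only: sum_distrib_right[symmetric]) (simp add: power2_eq_square)
  finally have "vnorm2 (A *\<^sub>v x) \<le> sqrt (S\<^sup>2 * (\<Sum>j<N. (u j)\<^sup>2))"
    unfolding vnorm2_def using A by simp
  also have "\<dots> = S * sqrt (\<Sum>j<N. (u j)\<^sup>2)"
    by (cases "N > 0") (simp_all add: S real_sqrt_mult)
  finally show ?thesis .
qed

lemma commut_mat_diag:
  assumes "A \<in> carrier_mat n n"
  shows "commut (mat_diag n f) A = mat n n (\<lambda>(i,j). (f i - f j) * A $$ (i,j))"
  unfolding commut_def mat_diag_mult_left[OF assms] mat_diag_mult_right[OF assms]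
  by (rule eq_matI) (auto simp: algebra_simps)

lemma funpow_commut_mat_diag:
  assumes "A \<in> carrier_mat n n"
  shows "(commut (mat_diag n f) ^^ p) A = mat n n (\<lambda>(i,j). (f i - f j)^p * A $$ (i,j))"
proof (induction p)
  case 0
  show ?case using assms by (intro eq_matI) auto
next
  case (Suc p)
  then show ?case by (simp add: commut_mat_diag) (rule eq_matI; simp)
qed

lemma mat_diag_add_one: "mat_diag n f + 1\<^sub>m n = mat_diag n (\<lambda>i. f i + (1::'a::semiring_1))"
  by (rule eq_matI) (auto simp: mat_diag_def)

lemma mat_diag_mult_vec_index:
  assumes "dim_vec x = n" "i < n"
  shows "(mat_diag n f *\<^sub>v x) $ i = f i * x $ i"
proof -
  have "(mat_diag n f *\<^sub>v x) $ i = (\<Sum>j<n. (if i = j then f j else 0) * x $ j)"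
    using assms by (subst mult_mat_vec_index[OF mat_diag_dim]) (auto simp: mat_diag_def)
  also have "\<dots> = (\<Sum>j<n. if i = j then f j * x $ j else 0)"
    by (intro sum.cong) auto
  also have "\<dots> = f i * x $ i"
    using assms(2) by simp
  finally show ?thesis .
qed

section \<open>The commutator estimate\<close>

definition D_diag :: "real \<Rightarrow> (nat \<Rightarrow> int^'d) \<Rightarrow> nat \<Rightarrow> real" where
  "D_diag \<gamma> hs c = 2 * pi\<^sup>2 * \<gamma> * real_of_int (isqnorm (hs c))"

lemma scaled_D_mat:
  "complex_of_real (\<gamma>/2) \<cdot>\<^sub>m D_mat ns hs = mat_diag (npts ns) (\<lambda>c. complex_of_real (D_diag \<gamma> hs c))"
proof -
  have "complex_of_real (\<gamma>/2) * complex_of_real (4 * pi\<^sup>2 * r) = complex_of_real (2 * pi\<^sup>2 * \<gamma> * r)" for r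
    by (simp only: of_real_mult[symmetric]) (simp add: field_simps)
  then show ?thesis
    unfolding D_mat_def D_diag_def by (intro eq_matI) (auto simp: mat_diag_def)
qed

lemma W_mat_carrier: "moduli_pos ns \<Longrightarrow> W_mat zs ns vh \<in> carrier_mat (npts ns) (npts ns)"
  unfolding W_mat_def V_mat_def mat_inv_F_mat by (meson F_mat_carrier F_adj_carrier mat_diag_dim mult_carrier_mat)

lemma isqnorm_diff_pow_mult_W_le:
  fixes vh :: "int^'d \<Rightarrow> complex" and hs :: "nat \<Rightarrow> int^'d"
  assumes pos: "moduli_pos ns" and mh: "min_anti_aliasing zs ns hs" and cc: "c < npts ns" "c' < npts ns"
    and ws: "coeff_weight vh p summable_on UNIV"
  shows "\<bar>real_of_int (isqnorm (hs c)) - real_of_int (isqnorm (hs c'))\<bar>^p * norm (W_mat zs ns vh $$ (c,c'))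
           \<le> (1 + real_of_int (isqnorm (hs c')))^p * infsum (coeff_weight vh p) (alias_class zs ns c c')"
proof -
  define w where "w = coeff_weight vh p"
  let ?S = "alias_class zs ns c c'"
  let ?a = "real_of_int (isqnorm (hs c))" and ?b = "real_of_int (isqnorm (hs c'))"
  have "norm (vh h) \<le> w h" for h
    using one_le_power[of "1 + 2 * real_of_int (isqnorm h)" p] isqnorm_nonneg[of h]
    unfolding w_def coeff_weight_def by (simp add: mult_le_cancel_left1)
  then have vs: "(\<lambda>h. norm (vh h)) summable_on A" for A
    by (intro summable_on_subset[OF summable_on_comparison_test[OF ws]]) (auto simp: w_def)
  have wS: "w summable_on ?S" unfolding w_def by (rule summable_on_subset[OF ws]) simp
  have pointwise: "\<bar>?a - ?b\<bar>^p * norm (vh h) \<le> (1 + ?b)^p * w h" if "h \<in> ?S" for h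
  proof -
    have "?a \<le> 2 * ?b + 2 * real_of_int (isqnorm h)"
      using min_anti_aliasing_isqnorm_le[OF mh cc that] by linarith
    then have "\<bar>?a - ?b\<bar> \<le> (1 + ?b) * (1 + 2 * real_of_int (isqnorm h))"
      using isqnorm_nonneg[of "hs c"] isqnorm_nonneg[of "hs c'"] isqnorm_nonneg[of h]
      by (simp add: algebra_simps abs_le_iff) (smt (verit) mult_nonneg_nonneg of_int_nonneg)
    then have "\<bar>?a - ?b\<bar>^p * norm (vh h) \<le> ((1 + ?b) * (1 + 2 * real_of_int (isqnorm h)))^p * norm (vh h)"
      by (intro mult_right_mono power_mono) auto
    then show ?thesis
      unfolding w_def coeff_weight_def power_mult_distrib by (simp add: mult_ac)
  qed
  have "norm (W_mat zs ns vh $$ (c,c')) \<le> infsum (\<lambda>h. norm (vh h)) ?S"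
    unfolding W_mat_entry[OF pos cc vs] by (rule norm_infsum_bound) (rule vs)
  then have "\<bar>?a - ?b\<bar>^p * norm (W_mat zs ns vh $$ (c,c')) \<le> infsum (\<lambda>h. \<bar>?a - ?b\<bar>^p * norm (vh h)) ?S"
    by (subst infsum_cmult_right) (auto intro: mult_left_mono vs)
  also have "\<dots> \<le> infsum (\<lambda>h. (1 + ?b)^p * w h) ?S"
    by (intro infsum_mono pointwise summable_on_cmult_right vs wS)
  also have "\<dots> = (1 + ?b)^p * infsum w ?S"
    by (rule infsum_cmult_right[OF wS])
  finally show ?thesis unfolding w_def .
qed

lemma one_plus_le_max_mult:
  fixes \<kappa> s :: real
  assumes "\<kappa> > 0" "s \<ge> 0"
  shows "1 + s \<le> max 1 (1/\<kappa>) * (\<kappa> * s + 1)"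
proof -
  have "s = 1/\<kappa> * (\<kappa> * s)" using assms by simp
  also have "\<dots> \<le> max 1 (1/\<kappa>) * (\<kappa> * s)" using assms by (intro mult_right_mono) auto
  finally show ?thesis by (simp add: distrib_left)
qed

lemma commutator_pow_W_entry_le:
  fixes vh :: "int^'d \<Rightarrow> complex" and hs :: "nat \<Rightarrow> int^'d"
  assumes \<gamma>: "\<gamma> > 0" and ws: "coeff_weight vh p summable_on UNIV"
    and pos: "moduli_pos ns" and mh: "min_anti_aliasing zs ns hs" and cc: "c < npts ns" "c' < npts ns"
  defines "t \<equiv> D_diag \<gamma> hs" and "\<kappa> \<equiv> 2 * pi\<^sup>2 * \<gamma>"
  shows "norm (((commut (mat_diag (npts ns) (\<lambda>c. complex_of_real (t c))) ^^ p)
                  (complex_of_real (1/\<gamma>) \<cdot>\<^sub>m W_mat zs ns vh)) $$ (c,c'))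
         \<le> \<kappa>^p / \<gamma> * (max 1 (1/\<kappa>))^p * infsum (coeff_weight vh p) (alias_class zs ns c c') * (t c' + 1)^p"
proof -
  let ?a = "real_of_int (isqnorm (hs c))" and ?b = "real_of_int (isqnorm (hs c'))"
  let ?I = "infsum (coeff_weight vh p) (alias_class zs ns c c')"
  have \<kappa>: "\<kappa> > 0" unfolding \<kappa>_def using \<gamma> by simp
  have t: "t c = \<kappa> * real_of_int (isqnorm (hs c))" for c
    unfolding t_def D_diag_def \<kappa>_def ..
  have diff: "complex_of_real (t c) - complex_of_real (t c') = complex_of_real (\<kappa> * (?a - ?b))"
    by (simp add: t algebra_simps)
  have "norm (complex_of_real (t c) - complex_of_real (t c')) = \<kappa> * \<bar>?a - ?b\<bar>"
    unfolding diff norm_of_real abs_mult using \<kappa> by simp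
  then have "norm (((commut (mat_diag (npts ns) (\<lambda>c. complex_of_real (t c))) ^^ p)
                  (complex_of_real (1/\<gamma>) \<cdot>\<^sub>m W_mat zs ns vh)) $$ (c,c'))
      = \<kappa>^p / \<gamma> * (\<bar>?a - ?b\<bar>^p * norm (W_mat zs ns vh $$ (c,c')))"
    unfolding funpow_commut_mat_diag[OF smult_carrier_mat[OF W_mat_carrier[OF pos]]]
    using cc \<gamma> W_mat_carrier[OF pos, of zs vh] by (simp add: norm_mult norm_divide norm_power power_mult_distrib)
  also have "\<dots> \<le> \<kappa>^p / \<gamma> * ((1 + ?b)^p * ?I)"
    using isqnorm_diff_pow_mult_W_le[OF pos mh cc ws] \<kappa> \<gamma> by (intro mult_left_mono) auto
  also have "\<dots> \<le> \<kappa>^p / \<gamma> * (((max 1 (1/\<kappa>))^p * (t c' + 1)^p) * ?I)"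
  proof -
    have "(1 + ?b)^p \<le> (max 1 (1/\<kappa>))^p * (t c' + 1)^p"
      unfolding power_mult_distrib[symmetric] t
      using one_plus_le_max_mult[OF \<kappa> of_int_nonneg[OF isqnorm_nonneg[of "hs c'"]]]
      by (intro power_mono) (auto simp: isqnorm_nonneg)
    then show ?thesis
      using \<kappa> \<gamma> by (intro mult_left_mono mult_right_mono) (auto simp: infsum_nonneg coeff_weight_nonneg)
  qed
  finally show ?thesis by (simp add: mult_ac)
qed

definition commutator_const :: "real \<Rightarrow> (int^'d \<Rightarrow> complex) \<Rightarrow> nat \<Rightarrow> real" where
  "commutator_const \<gamma> vh p =
     (2 * pi\<^sup>2 * \<gamma>)^p / \<gamma> * (max 1 (1 / (2 * pi\<^sup>2 * \<gamma>)))^p * infsum (coeff_weight vh p) UNIV"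

lemma commutator_pow_W_bound:
  fixes vh :: "int^'d \<Rightarrow> complex" and hs :: "nat \<Rightarrow> int^'d" and x :: "complex vec"
  assumes \<gamma>: "\<gamma> > 0" and ws: "coeff_weight vh p summable_on UNIV"
    and pos: "moduli_pos ns" and mh: "min_anti_aliasing zs ns hs" and x: "dim_vec x = npts ns"
  defines "t \<equiv> D_diag \<gamma> hs"
  shows "vnorm2 ((commut (mat_diag (npts ns) (\<lambda>c. complex_of_real (t c))) ^^ p)
                   (complex_of_real (1/\<gamma>) \<cdot>\<^sub>m W_mat zs ns vh) *\<^sub>v x)
         \<le> commutator_const \<gamma> vh p * vnorm2 (mat_diag (npts ns) (\<lambda>c. (complex_of_real (t c) + 1)^p) *\<^sub>v x)"
proof -
  let ?N = "npts ns"
  define A where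
    "A = (commut (mat_diag ?N (\<lambda>c. complex_of_real (t c))) ^^ p) (complex_of_real (1/\<gamma>) \<cdot>\<^sub>m W_mat zs ns vh)"
  define z where "z = mat_diag ?N (\<lambda>c. (complex_of_real (t c) + 1)^p) *\<^sub>v x"
  define C0 where "C0 = (2 * pi\<^sup>2 * \<gamma>)^p / \<gamma> * (max 1 (1 / (2 * pi\<^sup>2 * \<gamma>)))^p"
  define M where "M c c' = C0 * infsum (coeff_weight vh p) (alias_class zs ns c c')" for c c'
  have C0: "C0 \<ge> 0" unfolding C0_def using \<gamma> by simp
  have t_nonneg: "t c \<ge> 0" for c
    unfolding t_def D_diag_def using \<gamma> isqnorm_nonneg[of "hs c"] by simp
  have z: "norm (z $ c) = (t c + 1)^p * norm (x $ c)" if "c < ?N" for c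
  proof -
    have "complex_of_real (t c) + 1 = complex_of_real (t c + 1)" by simp
    then show ?thesis
      unfolding z_def mat_diag_mult_vec_index[OF x that] norm_mult norm_power norm_of_real
      using t_nonneg[of c] by simp
  qed
  have "norm (A $$ (c,c') * x $ c') \<le> M c c' * norm (z $ c')" if cc: "c < ?N" "c' < ?N" for c c'
    unfolding norm_mult z[OF cc(2)] A_def M_def C0_def t_def
    using mult_right_mono[OF commutator_pow_W_entry_le[OF \<gamma> ws pos mh cc], of "norm (x $ c')"]
    by (simp add: mult_ac)
  moreover have "(\<Sum>c'<?N. M c c') \<le> C0 * infsum (coeff_weight vh p) UNIV" for c
    unfolding M_def sum_distrib_left[symmetric] using C0
    by (intro mult_left_mono sum_infsum_disjoint_le[OF coeff_weight_nonneg ws] alias_class_disjoint_right[OF pos])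
  moreover have "(\<Sum>c<?N. M c c') \<le> C0 * infsum (coeff_weight vh p) UNIV" for c'
    unfolding M_def sum_distrib_left[symmetric] using C0
    by (intro mult_left_mono sum_infsum_disjoint_le[OF coeff_weight_nonneg ws] alias_class_disjoint_left[OF pos])
  moreover have "A \<in> carrier_mat ?N ?N"
    unfolding A_def funpow_commut_mat_diag[OF smult_carrier_mat[OF W_mat_carrier[OF pos]]] by simp
  ultimately have "vnorm2 (A *\<^sub>v x) \<le> C0 * infsum (coeff_weight vh p) UNIV * sqrt (\<Sum>c<?N. (norm (z $ c))\<^sup>2)"
    using x
    by (intro schur_test[where M = M and u = "\<lambda>c. norm (z $ c)"])
       (auto simp: M_def C0 coeff_weight_nonneg infsum_nonneg)
  moreover have "dim_vec z = ?N"
    unfolding z_def by (simp add: mat_diag_def)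
  ultimately show ?thesis
    unfolding A_def z_def commutator_const_def vnorm2_def C0_def by (simp add: mult_ac)
qed

theorem mainTheorem5:
  fixes vh gh :: "int^'d \<Rightarrow> complex" and \<alpha> \<beta> \<gamma> :: real
  assumes "\<gamma> > 0" and "korobov \<alpha> vh" and "korobov \<beta> gh" and "\<beta> \<ge> 2"
  shows
   "(\<alpha> > 5/2 \<longrightarrow> (\<exists>c1::real. \<forall>(zs :: (int^'d) list) ns hs (y :: real vec).
        1 \<le> length ns \<and> canonical_lattice zs ns \<and> points_distinct zs ns \<and>
        min_anti_aliasing zs ns hs \<and> dim_vec y = npts ns \<longrightarrow>
        (let D = complex_of_real (\<gamma>/2) \<cdot>\<^sub>m D_mat ns hs;
             W = complex_of_real (1/\<gamma>) \<cdot>\<^sub>m W_mat zs ns vh;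
             I = 1\<^sub>m (npts ns);
             yc = map_vec complex_of_real y
         in vnorm2 (commut D W *\<^sub>v yc) \<le> c1 * vnorm2 ((D + I) *\<^sub>v yc)))) \<and>
    (\<alpha> > 9/2 \<longrightarrow> (\<exists>c2::real. \<forall>(zs :: (int^'d) list) ns hs (y :: real vec).
        1 \<le> length ns \<and> canonical_lattice zs ns \<and> points_distinct zs ns \<and>
        min_anti_aliasing zs ns hs \<and> dim_vec y = npts ns \<longrightarrow>
        (let D = complex_of_real (\<gamma>/2) \<cdot>\<^sub>m D_mat ns hs;
             W = complex_of_real (1/\<gamma>) \<cdot>\<^sub>m W_mat zs ns vh;
             I = 1\<^sub>m (npts ns);
             yc = map_vec complex_of_real y
         in vnorm2 (commut D (commut D W) *\<^sub>v yc) \<le> c2 * vnorm2 (((D + I) * (D + I)) *\<^sub>v yc))))"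
proof -
  have bound: "vnorm2 ((commut (complex_of_real (\<gamma>/2) \<cdot>\<^sub>m D_mat ns hs) ^^ p)
                          (complex_of_real (1/\<gamma>) \<cdot>\<^sub>m W_mat zs ns vh) *\<^sub>v yc)
      \<le> commutator_const \<gamma> vh p * vnorm2 (mat_diag (npts ns) (\<lambda>c. (complex_of_real (D_diag \<gamma> hs c) + 1)^p) *\<^sub>v yc)"
    if "2*\<alpha> - 4 * real p > 1" "canonical_lattice zs ns" "min_anti_aliasing zs ns hs" "dim_vec yc = npts ns"
    for p zs ns and hs :: "nat \<Rightarrow> int^'d" and yc
    unfolding scaled_D_mat using that(2-4) canonical_lattice_moduli_pos
    by (intro commutator_pow_W_bound[OF assms(1) summable_on_coeff_weight[OF assms(2) that(1)]]) auto
  have D_plus_I: "complex_of_real (\<gamma>/2) \<cdot>\<^sub>m D_mat ns hs + 1\<^sub>m (npts ns)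
      = mat_diag (npts ns) (\<lambda>c. complex_of_real (D_diag \<gamma> hs c) + 1)" for ns and hs :: "nat \<Rightarrow> int^'d"
    unfolding scaled_D_mat by (rule mat_diag_add_one)
  show ?thesis
    apply (intro conjI impI)
    subgoal using bound[of 1]
      by (intro exI[of _ "commutator_const \<gamma> vh 1"] allI impI) (unfold Let_def D_plus_I, simp)
    subgoal using bound[of 2]
      by (intro exI[of _ "commutator_const \<gamma> vh 2"] allI impI) (unfold Let_def D_plus_I, simp add: numeral_2_eq_2)
    done
qed

end
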